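(* Let $G$ be a transitive permutation group on a finite set $\Omega$ of size $n$, and let $k$ be a positive integer with $k\le\lceil n/2\rceil-1$. Suppose that for every two disjoint subsets $A,B\subseteq\Omega$ of size $k$ there exists $g\in G$ with $A^g=B$. Then $G$ is $k$-homogeneous, i.e. $G$ is transitive on the set of all $k$-subsets of $\Omega$. *)

theory Defs
  imports Complex_Main "HOL-Algebra.Bij"
begin

text \<open>A permutation group on \<Omega> is a subgroup G of the symmetric group BijGroup \<Omega>.
  The image of a subset A under g is g ` A.\<close>

definition perm_transitive :: "'a set \<Rightarrow> ('a \<Rightarrow> 'a) set \<Rightarrow> bool" where
  "perm_transitive \<Omega> G \<longleftrightarrow> (\<forall>x\<in>\<Omega>. \<forall>y\<in>\<Omega>. \<exists>g\<in>G. g x = y)"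

definition k_homogeneous :: "'a set \<Rightarrow> ('a \<Rightarrow> 'a) set \<Rightarrow> nat \<Rightarrow> bool" where
  "k_homogeneous \<Omega> G k \<longleftrightarrow>
     (\<forall>A B. A \<subseteq> \<Omega> \<longrightarrow> B \<subseteq> \<Omega> \<longrightarrow> card A = k \<longrightarrow> card B = k \<longrightarrow> (\<exists>g\<in>G. g ` A = B))"

end

theory Submission
  imports Defs
begin

text \<open>Being mapped onto one another by an element of \<open>G\<close> is a transitive relation on subsets.
  If \<open>A \<union> B\<close> misses at least \<open>k\<close> points of \<open>\<Omega>\<close>, some \<open>k\<close>-subset \<open>C\<close> avoids both, and the
  hypothesis maps \<open>A\<close> onto \<open>C\<close> and \<open>C\<close> onto \<open>B\<close>. As \<open>n \<ge> 2k + 1\<close>, this applies whenever \<open>A\<close> and \<open>B\<close>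
  differ by exchanging a single point, and any two \<open>k\<close>-subsets are joined by a chain of such
  exchanges.\<close>

definition transports :: "('a \<Rightarrow> 'a) set \<Rightarrow> 'a set \<Rightarrow> 'a set \<Rightarrow> bool" where
  "transports G A B \<longleftrightarrow> (\<exists>g\<in>G. g ` A = B)"

lemma BijGroup_mult_eq_compose:
  assumes "g \<in> Bij \<Omega>" "h \<in> Bij \<Omega>"
  shows "g \<otimes>\<^bsub>BijGroup \<Omega>\<^esub> h = compose \<Omega> g h"
  using assms by (simp add: BijGroup_def)

lemma transports_trans:
  assumes G: "subgroup G (BijGroup \<Omega>)" and "A \<subseteq> \<Omega>"
    and "transports G A B" and "transports G B C"
  shows "transports G A C"
proof -
  obtain g h where g: "g \<in> G" "g ` A = B" and h: "h \<in> G" "h ` B = C"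
    using assms(3,4) unfolding transports_def by blast
  have "G \<subseteq> Bij \<Omega>"
    using subgroup.subset[OF G] by (simp add: BijGroup_def)
  then have "h \<otimes>\<^bsub>BijGroup \<Omega>\<^esub> g = compose \<Omega> h g"
    using g(1) h(1) by (blast intro: BijGroup_mult_eq_compose)
  then have "compose \<Omega> h g \<in> G"
    using subgroup.m_closed[OF G h(1) g(1)] by simp
  moreover
  have "compose \<Omega> h g ` A = h ` g ` A"
    unfolding image_image using \<open>A \<subseteq> \<Omega>\<close> by (intro image_cong) (auto simp: compose_eq)
  then have "compose \<Omega> h g ` A = C"
    using g(2) h(2) by simp
  ultimately show ?thesis
    unfolding transports_def by blast
qed

lemma transports_via_disjoint:
  assumes "finite \<Omega>" and G: "subgroup G (BijGroup \<Omega>)"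
    and disjoint: "\<And>A B. A \<subseteq> \<Omega> \<Longrightarrow> B \<subseteq> \<Omega> \<Longrightarrow> card A = k \<Longrightarrow> card B = k \<Longrightarrow> A \<inter> B = {}
           \<Longrightarrow> transports G A B"
    and A: "A \<subseteq> \<Omega>" "card A = k" and B: "B \<subseteq> \<Omega>" "card B = k"
    and room: "card (A \<union> B) + k \<le> card \<Omega>"
  shows "transports G A B"
proof -
  have "card (\<Omega> - (A \<union> B)) = card \<Omega> - card (A \<union> B)"
    using \<open>finite \<Omega>\<close> A B by (simp add: card_Diff_subset finite_subset)
  then have "k \<le> card (\<Omega> - (A \<union> B))"
    using room by linarith
  then obtain C where C: "C \<subseteq> \<Omega> - (A \<union> B)" "card C = k"
    by (meson obtain_subset_with_card_n)
  have "transports G A C"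
    by (rule disjoint) (use A C in auto)
  moreover have "transports G C B"
    by (rule disjoint) (use B C in auto)
  ultimately show ?thesis
    using transports_trans[OF G A(1)] by blast
qed

lemma exchange_one_point:
  assumes "finite A" "finite B" "card A = card B" "A \<noteq> B"
  obtains A' where "A' \<subseteq> A \<union> B" "card A' = card A" "card (A \<union> A') = card A + 1"
    "card (A' - B) < card (A - B)"
proof -
  have "A - B \<noteq> {}" "B - A \<noteq> {}"
    using card_subset_eq[OF assms(1), of B] card_subset_eq[OF assms(2), of A] assms(3,4) by auto
  then obtain x y where x: "x \<in> A" "x \<notin> B" and y: "y \<in> B" "y \<notin> A"
    by blast
  let ?A' = "insert y (A - {x})"
  have "?A' - B = (A - B) - {x}"
    using x y by auto
  then have "card (?A' - B) < card (A - B)"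
    using x assms(1) by (metis Diff_iff card_Diff1_less finite_Diff)
  moreover have "card (A \<union> ?A') = card A + 1"
  proof -
    have "A \<union> ?A' = insert y A"
      using x by auto
    then show ?thesis
      using y assms(1) by simp
  qed
  moreover have "card ?A' = card A"
    using y assms(1) card.remove[OF assms(1) x(1)] by simp
  moreover have "?A' \<subseteq> A \<union> B"
    using y by auto
  ultimately show thesis
    using that by blast
qed

lemma transports_k_subsets:
  assumes "finite \<Omega>" and G: "subgroup G (BijGroup \<Omega>)" and kn: "2 * k + 1 \<le> card \<Omega>"
    and disjoint: "\<And>A B. A \<subseteq> \<Omega> \<Longrightarrow> B \<subseteq> \<Omega> \<Longrightarrow> card A = k \<Longrightarrow> card B = k \<Longrightarrow> A \<inter> B = {}
           \<Longrightarrow> transports G A B"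
    and A: "A \<subseteq> \<Omega>" "card A = k" and B: "B \<subseteq> \<Omega>" "card B = k"
  shows "transports G A B"
  using A
proof (induction "card (A - B)" arbitrary: A rule: less_induct)
  case less
  have finite: "finite A" "finite B"
    using less.prems(1) B(1) \<open>finite \<Omega>\<close> finite_subset by auto
  have transports_nearby: "transports G A A'" if "A' \<subseteq> \<Omega>" "card A' = k" "card (A \<union> A') \<le> k + 1" for A'
    using transports_via_disjoint[OF \<open>finite \<Omega>\<close> G disjoint less.prems that(1,2)] that(3) kn
    by linarith
  show ?case
  proof (cases "A = B")
    case True
    then show ?thesis
      using transports_nearby B by simp
  next
    case False
    then obtain A' where A': "A' \<subseteq> A \<union> B" "card A' = k" "card (A \<union> A') = k + 1"
      "card (A' - B) < card (A - B)"
      using exchange_one_point[OF finite] less.prems(2) B(2) by metis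
    then have "A' \<subseteq> \<Omega>"
      using less.prems(1) B(1) by blast
    then have "transports G A A'" "transports G A' B"
      using transports_nearby less.hyps A' by simp_all
    then show ?thesis
      using transports_trans[OF G less.prems(1)] by blast
  qed
qed

theorem lemma7p5:
  fixes \<Omega> :: "'a set" and G :: "('a \<Rightarrow> 'a) set" and n k :: nat
  assumes "finite \<Omega>" and "card \<Omega> = n"
    and "subgroup G (BijGroup \<Omega>)"
    and "perm_transitive \<Omega> G"
    and "k \<ge> 1" and "int k \<le> \<lceil>real n / 2\<rceil> - 1"
    and "\<forall>A B. A \<subseteq> \<Omega> \<longrightarrow> B \<subseteq> \<Omega> \<longrightarrow> card A = k \<longrightarrow> card B = k \<longrightarrow> A \<inter> B = {}
           \<longrightarrow> (\<exists>g\<in>G. g ` A = B)"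
  shows "k_homogeneous \<Omega> G k"
proof -
  have "real k + 1 < real n / 2 + 1"
    using assms(6) by linarith
  then have "2 * k + 1 \<le> card \<Omega>"
    using assms(2) by linarith
  moreover have "transports G A B"
    if "A \<subseteq> \<Omega>" "B \<subseteq> \<Omega>" "card A = k" "card B = k" "A \<inter> B = {}" for A B
    using assms(7) that unfolding transports_def by blast
  ultimately have "transports G A B"
    if "A \<subseteq> \<Omega>" "B \<subseteq> \<Omega>" "card A = k" "card B = k" for A B
    using transports_k_subsets[OF assms(1,3)] that by blast
  then show ?thesis
    unfolding k_homogeneous_def transports_def by blast
qed

end
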